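(* Let $R\subseteq\mathbb{R}^2$ be open and let $f:R\to\mathbb{R}^2$ be $C^1$. Let $R_0$ be a connected component of $R\setminus f^{-1}(f(S)\cup C(f))$, choose $z_0\in R_0$, let $w_0=f(z_0)$, and let $\Omega_0$ be the connected component of $\mathbb{R}^2\setminus(f(S)\cup C(f))$ containing $w_0$. Suppose that $w_0$ has exactly $n_0$ distinct preimages in $R_0$, where $0<n_0\le\mathrm{Val}(f,w_0)$. Then every $w\in\Omega_0$ has exactly $n_0$ distinct preimages in $R_0$.
   Context: Write $f=(u,v)$; $J_f=u_xv_y-u_yv_x$ and $S=\{z\in R: J_f(z)=0\}$. $C(f)$ is the set of finite points $\zeta\in\mathbb{R}^2$ for which there is a sequence $(z_n)\subset R$ converging to a point of $\partial R$ or with $|z_n|\to\infty$, such that $f(z_n)\to\zeta$. $\mathrm{Val}(f,w)$ is the number (possibly infinite) of distinct $z\in R$ with $f(z)=w$. *)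

theory Defs
  imports "HOL-Analysis.Analysis" "HOL-Library.Extended_Nat"
begin

definition C1_on :: "(real^2) set \<Rightarrow> (real^2 \<Rightarrow> real^2) \<Rightarrow> bool" where
  "C1_on R f \<longleftrightarrow> (\<forall>z\<in>R. f differentiable (at z)) \<and>
      continuous_on R (\<lambda>z. matrix (frechet_derivative f (at z)))"

definition jacobian_det :: "(real^2 \<Rightarrow> real^2) \<Rightarrow> real^2 \<Rightarrow> real" where
  "jacobian_det f z = det (matrix (frechet_derivative f (at z)))"

definition crit_set :: "(real^2) set \<Rightarrow> (real^2 \<Rightarrow> real^2) \<Rightarrow> (real^2) set" where
  "crit_set R f = {z\<in>R. jacobian_det f z = 0}"

definition cluster_set :: "(real^2) set \<Rightarrow> (real^2 \<Rightarrow> real^2) \<Rightarrow> (real^2) set" where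
  "cluster_set R f = {\<zeta>. \<exists>z::nat \<Rightarrow> real^2. (\<forall>n. z n \<in> R) \<and>
      ((\<exists>p\<in>frontier R. z \<longlonglongrightarrow> p) \<or> filterlim (\<lambda>n. norm (z n)) at_top sequentially) \<and>
      (\<lambda>n. f (z n)) \<longlonglongrightarrow> \<zeta>}"

definition Val :: "(real^2) set \<Rightarrow> (real^2 \<Rightarrow> real^2) \<Rightarrow> real^2 \<Rightarrow> enat" where
  "Val R f w = (if finite {z\<in>R. f z = w} then enat (card {z\<in>R. f z = w}) else \<infinity>)"

end

theory Submission
  imports Defs
begin

text \<open>Write E for f(S) \<union> C(f). Near a value w \<notin> C(f) the map f is proper: the preimage of a
  small ball around w lies in a compact subset K of R. If moreover w \<notin> f(S), every preimage of w
  is a regular point, so by the inverse function theorem the fibre of w in R0 is discrete, hence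
  finite, and each of its points z has a ball B(z) on which f is injective; by invariance of domain
  f(B(z)) is open. For w' close to w the fibre of w' in R0 therefore meets every B(z) in exactly one
  point, and it has no point outside these balls: such points would accumulate, inside the compact
  set K \<inter> closure R0, at a preimage of w, which lies in R0 because the component R0 is relatively
  closed in R minus the preimage of E. So the number of preimages in R0 is locally constant on the
  set -E, which is open by the same properness argument, hence constant on its component \<Omega>0.\<close>

lemma C1_on_imp_continuous_on:
  assumes "C1_on R f"
  shows "continuous_on R f"
  using assms unfolding C1_on_def
  by (meson continuous_at_imp_continuous_on differentiable_imp_continuous_within)

lemma continuous_on_jacobian_det:
  assumes "C1_on R f"
  shows "continuous_on R (jacobian_det f)"
proof -
  have "continuous_on R (\<lambda>z. matrix (frechet_derivative f (at z)))"
    using assms unfolding C1_on_def by blast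
  then show ?thesis
    unfolding jacobian_det_def det_2 by (intro continuous_intros)
qed

lemma onorm_matrix_le_norm:
  fixes A :: "real^'n^'m"
  shows "onorm ((*v) A) \<le> real CARD('m) * real CARD('n) * norm A"
proof (rule onorm_le_matrix_component)
  fix i j
  have "\<bar>A $ i $ j\<bar> \<le> norm (A $ i)" by (rule component_le_norm_cart)
  also have "\<dots> \<le> norm A" by (rule Finite_Cartesian_Product.norm_nth_le)
  finally show "\<bar>A $ i $ j\<bar> \<le> norm A" .
qed

lemma C1_on_locally_injective:
  assumes "open R" "C1_on R f" "z \<in> R" "jacobian_det f z \<noteq> 0"
  obtains r where "r > 0" "ball z r \<subseteq> R" "inj_on f (ball z r)"
proof -
  define M where "M x = matrix (frechet_derivative f (at x))" for x
  have der: "(f has_derivative (*v) (M x)) (at x)" if "x \<in> R" for x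
    using assms(2) that jacobian_works[of f "at x"] unfolding C1_on_def M_def jacobian_def by auto
  have "invertible (M z)"
    using assms(4) invertible_det_nz unfolding jacobian_det_def M_def by auto
  then obtain B where B: "B ** M z = mat 1"
    using invertible_left_inverse by blast
  have "isCont M z"
    using assms(1-3) unfolding C1_on_def M_def by (simp add: continuous_on_eq_continuous_at)
  then have near: "\<exists>d>0. \<forall>x. dist z x < d \<longrightarrow> onorm (\<lambda>v. M x *v v - M z *v v) < e"
    if "e > 0" for e
  proof -
    obtain d where d: "d > 0" "\<And>x. dist x z < d \<Longrightarrow> norm (M x - M z) < e / 4"
      using \<open>isCont M z\<close> \<open>e > 0\<close> unfolding continuous_at_eps_delta dist_norm
      by (metis divide_pos_pos zero_less_numeral)
    have "onorm (\<lambda>v. M x *v v - M z *v v) < e" if "dist z x < d" for x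
    proof -
      have "(\<lambda>v. M x *v v - M z *v v) = (*v) (M x - M z)"
        by (simp add: matrix_vector_mult_diff_rdistrib fun_eq_iff)
      then show ?thesis
        using onorm_matrix_le_norm[of "M x - M z"] d(2)[of x] that by (simp add: dist_commute)
    qed
    then show ?thesis using d(1) by blast
  qed
  show ?thesis
  proof (rule has_derivative_locally_injective[OF assms(3,1) matrix_vector_mul_bounded_linear _ der near])
    show "(*v) B \<circ> (*v) (M z) = id"
      using B by (auto simp: matrix_vector_mul_assoc)
  qed (use that in auto)
qed

lemma finite_regular_fibre_in_compact:
  fixes f :: "real^2 \<Rightarrow> real^2"
  assumes "open R" "C1_on R f" "compact K" "K \<subseteq> R"
    and "\<And>z. z \<in> K \<Longrightarrow> f z = w \<Longrightarrow> jacobian_det f z \<noteq> 0"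
  shows "finite {z\<in>K. f z = w}"
proof -
  let ?P = "{z\<in>K. f z = w}"
  have "closed ?P"
    using continuous_closed_preimage_constant[OF continuous_on_subset[OF C1_on_imp_continuous_on[OF assms(2)] assms(4)]]
      compact_imp_closed[OF assms(3)] by blast
  then have "compact (K \<inter> ?P)"
    using assms(3) by (rule compact_Int_closed[rotated])
  then have "compact ?P"
    by (simp add: Int_absorb1)
  moreover have "\<not> p islimpt ?P" if p: "p \<in> ?P" for p
  proof -
    have "p \<in> R" "jacobian_det f p \<noteq> 0"
      using assms(4,5) p by auto
    then obtain r where r: "r > 0" "inj_on f (ball p r)"
      using C1_on_locally_injective[OF assms(1,2)] by metis
    have "y = p" if "y \<in> ?P" "dist y p < r" for y
      using inj_onD[OF r(2), of y p] that p r(1) by (simp add: dist_commute)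
    then show ?thesis
      unfolding islimpt_approachable using r(1) by blast
  qed
  ultimately show ?thesis
    using finite_not_islimpt_in_compact[of ?P ?P] by simp
qed

lemma non_cluster_point_imp_convergent_subseq:
  fixes y :: "nat \<Rightarrow> real^2"
  assumes "open R" "w \<notin> cluster_set R f" "\<And>n. y n \<in> R" "(\<lambda>n. f (y n)) \<longlonglongrightarrow> w"
  obtains l r where "l \<in> R" "strict_mono r" "(y \<circ> r) \<longlonglongrightarrow> l"
proof -
  have "\<not> filterlim (\<lambda>n. norm (y n)) at_top sequentially"
    using assms(2-4) unfolding cluster_set_def by blast
  then obtain Z where "frequently (\<lambda>n. norm (y n) < Z) sequentially"
    unfolding filterlim_at_top frequently_def by (simp add: not_less) blast
  then have "infinite {n. norm (y n) < Z}"
    by (simp add: frequently_cofinite[symmetric] cofinite_eq_sequentially)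
  then obtain r1 :: "nat \<Rightarrow> nat" where r1: "strict_mono r1" "\<And>n. norm (y (r1 n)) < Z"
    using infinite_enumerate by blast
  then have "\<forall>n. (y \<circ> r1) n \<in> cball 0 Z"
    by (auto intro: less_imp_le)
  then obtain l r2 where "strict_mono r2" "((y \<circ> r1) \<circ> r2) \<longlonglongrightarrow> l"
    using compact_imp_seq_compact[OF compact_cball] unfolding seq_compact_def by metis
  moreover define r where "r = r1 \<circ> r2"
  ultimately have r: "strict_mono r" "(y \<circ> r) \<longlonglongrightarrow> l"
    using r1(1) by (simp_all add: strict_mono_o o_assoc)
  have "l \<in> R"
  proof (rule ccontr)
    assume "l \<notin> R"
    moreover have "l \<in> closure R"
      unfolding closure_sequential using r(2) assms(3) by (intro exI[of _ "y \<circ> r"]) auto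
    ultimately have "l \<in> frontier R"
      using assms(1) by (simp add: frontier_def interior_open)
    moreover have "(\<lambda>n. f ((y \<circ> r) n)) \<longlonglongrightarrow> w"
      using LIMSEQ_subseq_LIMSEQ[OF assms(4) r(1)] by (simp add: o_def)
    ultimately have "w \<in> cluster_set R f"
      unfolding cluster_set_def using r(2) assms(3) by (intro CollectI exI[of _ "y \<circ> r"]) auto
    then show False using assms(2) by blast
  qed
  then show ?thesis using that r by blast
qed

lemma non_cluster_point_proper_near:
  fixes f :: "real^2 \<Rightarrow> real^2"
  assumes "open R" "w \<notin> cluster_set R f"
  obtains e K where "e > 0" "compact K" "K \<subseteq> R" "\<And>y. y \<in> R \<Longrightarrow> dist (f y) w < e \<Longrightarrow> y \<in> K"
proof -
  obtain C :: "nat \<Rightarrow> (real^2) set" where C: "\<And>n. compact (C n)" "\<And>n. C n \<subseteq> R"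
    "\<And>K. compact K \<Longrightarrow> K \<subseteq> R \<Longrightarrow> \<exists>N. \<forall>n\<ge>N. K \<subseteq> C n"
    by (rule open_Union_compact_subsets[OF assms(1)]) blast
  have "\<exists>n. \<forall>y\<in>R. dist (f y) w < 1 / real (Suc n) \<longrightarrow> y \<in> C n"
  proof (rule ccontr)
    assume "\<nexists>n. \<forall>y\<in>R. dist (f y) w < 1 / real (Suc n) \<longrightarrow> y \<in> C n"
    then obtain y where y: "\<And>n. y n \<in> R" "\<And>n. dist (f (y n)) w < 1 / real (Suc n)"
      "\<And>n. y n \<notin> C n"
      by metis
    have fy: "(\<lambda>n. f (y n)) \<longlonglongrightarrow> w"
      by (rule tendsto_dist_iff[THEN iffD2], rule LIMSEQ_norm_0) (use y(2) in simp)
    obtain l r where l: "l \<in> R" "strict_mono r" "(y \<circ> r) \<longlonglongrightarrow> l"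
      using non_cluster_point_imp_convergent_subseq[OF assms _ fy] y(1) by blast
    obtain \<delta> where \<delta>: "\<delta> > 0" "cball l \<delta> \<subseteq> R"
      using l(1) assms(1) open_contains_cball by blast
    obtain N where N: "\<And>n. n \<ge> N \<Longrightarrow> cball l \<delta> \<subseteq> C n"
      using C(3)[OF compact_cball \<delta>(2)] by blast
    obtain M where M: "\<And>n. n \<ge> M \<Longrightarrow> dist (y (r n)) l < \<delta>"
      using l(3) \<delta>(1) unfolding LIMSEQ_def by auto
    define n where "n = max N M"
    have "y (r n) \<in> cball l \<delta>"
      using M[of n] by (simp add: n_def dist_commute)
    moreover have "r n \<ge> N"
      using seq_suble[OF l(2), of n] by (simp add: n_def)
    ultimately show False
      using N y(3) by blast
  qed
  then obtain n where "\<forall>y\<in>R. dist (f y) w < 1 / real (Suc n) \<longrightarrow> y \<in> C n"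
    by blast
  then show ?thesis
    by (intro that[OF _ C(1,2)]) auto
qed

lemma closed_cluster_set:
  fixes f :: "real^2 \<Rightarrow> real^2"
  assumes "open R"
  shows "closed (cluster_set R f)"
  unfolding closed_def open_contains_ball
proof
  fix w assume "w \<in> - cluster_set R f"
  then obtain e K where eK: "e > 0" "compact K" "K \<subseteq> R"
    "\<And>y. y \<in> R \<Longrightarrow> dist (f y) w < e \<Longrightarrow> y \<in> K"
    using non_cluster_point_proper_near[OF assms] by blast
  have "\<zeta> \<notin> cluster_set R f" if "\<zeta> \<in> ball w e" for \<zeta>
  proof
    assume "\<zeta> \<in> cluster_set R f"
    then obtain z where z: "\<And>n. z n \<in> R"
      "(\<exists>p\<in>frontier R. z \<longlonglongrightarrow> p) \<or> filterlim (\<lambda>n. norm (z n)) at_top sequentially"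
      "(\<lambda>n. f (z n)) \<longlonglongrightarrow> \<zeta>"
      unfolding cluster_set_def by blast
    have "eventually (\<lambda>n. f (z n) \<in> ball w e) sequentially"
      using topological_tendstoD[OF z(3) open_ball that] .
    then have in_K: "eventually (\<lambda>n. z n \<in> K) sequentially"
      by eventually_elim (use eK(4) z(1) in \<open>auto simp: dist_commute\<close>)
    from z(2) show False
    proof
      assume "\<exists>p\<in>frontier R. z \<longlonglongrightarrow> p"
      then obtain p where p: "p \<in> frontier R" "z \<longlonglongrightarrow> p" by blast
      have "p \<in> K"
        using Lim_in_closed_set[OF compact_imp_closed[OF eK(2)] in_K _ p(2)] by simp
      then show False
        using p(1) eK(3) assms by (auto simp: frontier_def interior_open)
    next
      assume "filterlim (\<lambda>n. norm (z n)) at_top sequentially"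
      moreover obtain B where B: "\<And>x. x \<in> K \<Longrightarrow> norm x \<le> B"
        using compact_imp_bounded[OF eK(2)] bounded_iff by blast
      ultimately have "eventually (\<lambda>n. B + 1 \<le> norm (z n)) sequentially"
        unfolding filterlim_at_top by blast
      with in_K have "eventually (\<lambda>n. False) sequentially"
        by eventually_elim (use B in fastforce)
      then show False by simp
    qed
  qed
  then have "ball w e \<subseteq> - cluster_set R f"
    by blast
  then show "\<exists>e>0. ball w e \<subseteq> - cluster_set R f"
    using eK(1) by blast
qed

lemma closure_image_subset_cluster_set:
  fixes f :: "real^2 \<Rightarrow> real^2"
  assumes "open R" "continuous_on R f" "closedin (top_of_set R) A"
  shows "closure (f ` A) \<subseteq> f ` A \<union> cluster_set R f"
proof
  fix w assume "w \<in> closure (f ` A)"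
  then obtain x where x: "\<forall>n. x n \<in> f ` A" "x \<longlonglongrightarrow> w"
    unfolding closure_sequential by blast
  have "\<forall>n. \<exists>a. a \<in> A \<and> f a = x n"
    using x(1) by (metis imageE)
  then obtain a where a_in: "\<And>n. a n \<in> A" and a_eq: "\<And>n. f (a n) = x n"
    by metis
  have a: "\<And>n. a n \<in> A" "(\<lambda>n. f (a n)) \<longlonglongrightarrow> w"
    using a_in x(2) by (simp_all add: a_eq)
  show "w \<in> f ` A \<union> cluster_set R f"
  proof (rule UnCI)
    assume "w \<notin> cluster_set R f"
    moreover have "A \<subseteq> R"
      using assms(3) by (rule closedin_imp_subset)
    ultimately obtain l r where l: "l \<in> R" "strict_mono r" "(a \<circ> r) \<longlonglongrightarrow> l"
      using non_cluster_point_imp_convergent_subseq[OF assms(1), where y = a and f = f] a by blast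
    obtain T where "closed T" "A = R \<inter> T"
      using assms(3) closedin_closed by blast
    then have "l \<in> A"
      using closed_sequentially[OF _ _ l(3)] a(1) l(1) by auto
    have "isCont f l"
      using assms(1,2) l(1) by (simp add: continuous_on_eq_continuous_at)
    then have "(\<lambda>n. f ((a \<circ> r) n)) \<longlonglongrightarrow> f l"
      using l(3) by (rule isCont_tendsto_compose)
    moreover have "(\<lambda>n. f ((a \<circ> r) n)) \<longlonglongrightarrow> w"
      using LIMSEQ_subseq_LIMSEQ[OF a(2) l(2)] by (simp add: o_def)
    ultimately have "w = f l"
      by (rule LIMSEQ_unique[rotated])
    then show "w \<in> f ` A"
      using \<open>l \<in> A\<close> by blast
  qed
qed

lemma closed_crit_values_Un_cluster_set:
  fixes f :: "real^2 \<Rightarrow> real^2"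
  assumes "open R" "C1_on R f"
  shows "closed (f ` crit_set R f \<union> cluster_set R f)"
proof -
  have "closedin (top_of_set R) (crit_set R f)"
    unfolding crit_set_def
    by (rule continuous_closedin_preimage_constant[OF continuous_on_jacobian_det[OF assms(2)]])
  then have "closure (f ` crit_set R f) \<subseteq> f ` crit_set R f \<union> cluster_set R f"
    by (rule closure_image_subset_cluster_set[OF assms(1) C1_on_imp_continuous_on[OF assms(2)]])
  then have "closure (f ` crit_set R f \<union> cluster_set R f) \<subseteq> f ` crit_set R f \<union> cluster_set R f"
    using closure_closed[OF closed_cluster_set[OF assms(1)]] by (simp add: closure_Un)
  then show ?thesis
    using closure_subset_eq by blast
qed

lemma open_diff_vimage_crit_values_Un_cluster_set:
  fixes f :: "real^2 \<Rightarrow> real^2"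
  assumes "open R" "C1_on R f"
  shows "open (R - f -` (f ` crit_set R f \<union> cluster_set R f))"
proof -
  have "open (R \<inter> f -` (- (f ` crit_set R f \<union> cluster_set R f)))"
    using continuous_open_preimage[OF C1_on_imp_continuous_on[OF assms(2)] assms(1)]
      closed_crit_values_Un_cluster_set[OF assms] by (simp only: open_Compl)
  then show ?thesis
    by (metis Diff_eq vimage_Compl)
qed

lemma component_Int_closure:
  assumes "C \<in> components S"
  shows "S \<inter> closure C = C"
proof -
  obtain T where "closed T" "C = S \<inter> T"
    using closedin_component[OF assms] closedin_closed by blast
  then show ?thesis
    using closure_minimal[of C T] closure_subset[of C] by blast
qed

lemma disjoint_injective_balls:
  fixes P :: "'a::metric_space set"
  assumes "finite P" "open U" "P \<subseteq> U" "\<And>z. z \<in> P \<Longrightarrow> \<exists>r>0. inj_on f (ball z r)"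
  obtains \<rho> where "\<And>z. z \<in> P \<Longrightarrow> \<rho> z > 0" "\<And>z. z \<in> P \<Longrightarrow> ball z (\<rho> z) \<subseteq> U"
    "\<And>z. z \<in> P \<Longrightarrow> inj_on f (ball z (\<rho> z))" "disjoint_family_on (\<lambda>z. ball z (\<rho> z)) P"
proof -
  have "\<exists>r>0. ball z r \<subseteq> U \<and> inj_on f (ball z r) \<and> (\<forall>z'\<in>P. z' \<noteq> z \<longrightarrow> 2 * r \<le> dist z z')"
    if z: "z \<in> P" for z
  proof -
    obtain r1 where r1: "r1 > 0" "inj_on f (ball z r1)"
      using assms(4)[OF z] by blast
    obtain r2 where r2: "r2 > 0" "ball z r2 \<subseteq> U"
      using assms(2,3) z open_contains_ball by blast
    obtain d where d: "d > 0" "\<forall>z'\<in>P. z' \<noteq> z \<longrightarrow> d \<le> dist z z'"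
      using finite_set_avoid[OF assms(1)] by blast
    show ?thesis
    proof (intro exI conjI ballI impI)
      show "min r1 (min r2 (d/2)) > 0" using r1 r2 d by simp
      show "ball z (min r1 (min r2 (d/2))) \<subseteq> U" using r2 by auto
      show "inj_on f (ball z (min r1 (min r2 (d/2))))" using r1(2) by (rule inj_on_subset) auto
      show "2 * min r1 (min r2 (d/2)) \<le> dist z z'" if "z' \<in> P" "z' \<noteq> z" for z'
        using d(2) that by fastforce
    qed
  qed
  then obtain \<rho> where \<rho>: "\<And>z. z \<in> P \<Longrightarrow> \<rho> z > 0 \<and> ball z (\<rho> z) \<subseteq> U \<and> inj_on f (ball z (\<rho> z))
      \<and> (\<forall>z'\<in>P. z' \<noteq> z \<longrightarrow> 2 * \<rho> z \<le> dist z z')"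
    by metis
  have disjoint: "disjoint_family_on (\<lambda>z. ball z (\<rho> z)) P"
    unfolding disjoint_family_on_def
  proof (intro ballI impI, rule ccontr)
    fix z z' assume zz: "z \<in> P" "z' \<in> P" "z \<noteq> z'" "ball z (\<rho> z) \<inter> ball z' (\<rho> z') \<noteq> {}"
    then obtain x where "dist z x < \<rho> z" "dist z' x < \<rho> z'"
      by auto
    moreover have "2 * \<rho> z \<le> dist z z'" "2 * \<rho> z' \<le> dist z z'"
      using \<rho>[OF zz(1)] \<rho>[OF zz(2)] zz(1-3) by (auto simp: dist_commute)
    ultimately show False
      using dist_triangle2[of z z' x] by linarith
  qed
  show ?thesis
    by (rule that[of \<rho>]) (use \<rho> disjoint in blast)+
qed

lemma card_fibre_eq_of_injective_cover:
  assumes "finite P" "disjoint_family_on B P"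
    and "\<And>z. z \<in> P \<Longrightarrow> B z \<subseteq> X" "\<And>z. z \<in> P \<Longrightarrow> inj_on f (B z)" "\<And>z. z \<in> P \<Longrightarrow> w \<in> f ` B z"
    and "{x\<in>X. f x = w} \<subseteq> (\<Union>z\<in>P. B z)"
  shows "finite {x\<in>X. f x = w} \<and> card {x\<in>X. f x = w} = card P"
proof -
  define G where "G z = {x\<in>X. f x = w} \<inter> B z" for z
  have single: "card (G z) = 1" if z: "z \<in> P" for z
  proof -
    obtain x where "x \<in> B z" "f x = w"
      using assms(5)[OF z] by blast
    then have "G z = {x}"
      using assms(3,4)[OF z] unfolding G_def inj_on_def by blast
    then show ?thesis by simp
  qed
  then have fin: "\<forall>z\<in>P. finite (G z)"
    by (metis card.infinite zero_neq_one)
  have union: "{x\<in>X. f x = w} = (\<Union>z\<in>P. G z)"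
    using assms(6) unfolding G_def by blast
  have "card (\<Union>z\<in>P. G z) = (\<Sum>z\<in>P. card (G z))"
    using card_UN_disjoint[OF assms(1) fin] assms(2)
    unfolding G_def disjoint_family_on_def by blast
  then show ?thesis
    using union fin assms(1) single by simp
qed

lemma compact_fibre_neighbourhood:
  fixes f :: "'a::metric_space \<Rightarrow> 'b::heine_borel"
  assumes "compact A" "continuous_on A f" "open U" "{y\<in>A. f y = w} \<subseteq> U"
  obtains \<delta> where "\<delta> > 0" "\<And>y. y \<in> A \<Longrightarrow> dist (f y) w < \<delta> \<Longrightarrow> y \<in> U"
proof -
  have compact: "compact (f ` (A - U))"
    using assms(1-3) by (intro compact_continuous_image continuous_on_subset[OF assms(2)]
        compact_diff) auto
  have "w \<notin> f ` (A - U)"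
    using assms(4) by blast
  then obtain \<delta> where \<delta>: "\<delta> > 0" "\<forall>x\<in>f ` (A - U). \<delta> \<le> dist w x"
    using separate_point_closed[OF compact_imp_closed[OF compact]] by blast
  show ?thesis
  proof (rule that[OF \<delta>(1)])
    fix y assume "y \<in> A" "dist (f y) w < \<delta>"
    then show "y \<in> U"
      using \<delta>(2) by (force simp: dist_commute)
  qed
qed

lemma card_fibre_eventually_const:
  fixes f :: "'a::euclidean_space \<Rightarrow> 'a"
  assumes "open U" "continuous_on U f" "finite {z\<in>U. f z = w}"
    and "\<And>z. z \<in> U \<Longrightarrow> f z = w \<Longrightarrow> \<exists>r>0. inj_on f (ball z r)"
    and "compact A" "continuous_on A f" "{y\<in>A. f y = w} \<subseteq> U"
    and "e > 0" "\<And>y. y \<in> U \<Longrightarrow> dist (f y) w < e \<Longrightarrow> y \<in> A"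
  shows "\<forall>\<^sub>F w' in nhds w. finite {z\<in>U. f z = w'} \<and> card {z\<in>U. f z = w'} = card {z\<in>U. f z = w}"
proof -
  define P where "P = {z\<in>U. f z = w}"
  have "P \<subseteq> U"
    unfolding P_def by blast
  have inj: "\<exists>r>0. inj_on f (ball z r)" if "z \<in> P" for z
    using assms(4) that unfolding P_def by blast
  obtain \<rho> where \<rho>: "\<And>z. z \<in> P \<Longrightarrow> \<rho> z > 0" "\<And>z. z \<in> P \<Longrightarrow> ball z (\<rho> z) \<subseteq> U"
    "\<And>z. z \<in> P \<Longrightarrow> inj_on f (ball z (\<rho> z))" "disjoint_family_on (\<lambda>z. ball z (\<rho> z)) P"
    by (rule disjoint_injective_balls[OF assms(3)[folded P_def] assms(1) \<open>P \<subseteq> U\<close>, of f])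
      (use inj in blast, rule that)
  have "open (f ` ball z (\<rho> z))" if "z \<in> P" for z
    using \<rho>(2,3)[OF that]
    by (intro invariance_of_domain continuous_on_subset[OF assms(2)]) auto
  then have "open (\<Inter>z\<in>P. f ` ball z (\<rho> z))"
    using assms(3) unfolding P_def by blast
  moreover have "w \<in> f ` ball z (\<rho> z)" if "z \<in> P" for z
    using \<rho>(1)[OF that] that unfolding P_def by (intro image_eqI[of w f z]) auto
  ultimately obtain \<delta>1 where \<delta>1: "\<delta>1 > 0" "ball w \<delta>1 \<subseteq> (\<Inter>z\<in>P. f ` ball z (\<rho> z))"
    using open_contains_ball[of "\<Inter>z\<in>P. f ` ball z (\<rho> z)"] by blast
  have cover: "{y\<in>A. f y = w} \<subseteq> (\<Union>z\<in>P. ball z (\<rho> z))"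
    using assms(7) \<rho>(1) unfolding P_def by force
  obtain \<delta>2 where \<delta>2: "\<delta>2 > 0"
    "\<And>y. y \<in> A \<Longrightarrow> dist (f y) w < \<delta>2 \<Longrightarrow> y \<in> (\<Union>z\<in>P. ball z (\<rho> z))"
    by (rule compact_fibre_neighbourhood[OF assms(5,6) _ cover]) (auto intro: that)
  have near: "finite {z\<in>U. f z = w'} \<and> card {z\<in>U. f z = w'} = card P"
    if w': "w' \<in> ball w (min e (min \<delta>1 \<delta>2))" for w'
  proof (rule card_fibre_eq_of_injective_cover[OF assms(3)[folded P_def] \<rho>(4) \<rho>(2,3)])
    show "w' \<in> f ` ball z (\<rho> z)" if "z \<in> P" for z
      using \<delta>1(2) w' that by auto
    show "{z\<in>U. f z = w'} \<subseteq> (\<Union>z\<in>P. ball z (\<rho> z))"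
      using assms(9) \<delta>2(2) w' by (force simp: dist_commute)
  qed
  have "min e (min \<delta>1 \<delta>2) > 0"
    using assms(8) \<delta>1(1) \<delta>2(1) by simp
  then have "\<forall>\<^sub>F w' in nhds w. w' \<in> ball w (min e (min \<delta>1 \<delta>2))"
    by (rule eventually_nhds_ball)
  then show ?thesis
    by (rule eventually_mono) (use near in \<open>simp add: P_def\<close>)
qed

lemma card_fibre_in_component_locally_constant:
  fixes f :: "real^2 \<Rightarrow> real^2"
  assumes "open R" "C1_on R f"
    and "R0 \<in> components (R - f -` (f ` crit_set R f \<union> cluster_set R f))"
    and "w \<notin> f ` crit_set R f \<union> cluster_set R f"
  shows "\<forall>\<^sub>F w' in nhds w. finite {z\<in>R0. f z = w'} \<and> card {z\<in>R0. f z = w'} = card {z\<in>R0. f z = w}"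
proof -
  define E where "E = f ` crit_set R f \<union> cluster_set R f"
  have R0: "R0 \<in> components (R - f -` E)" and "w \<notin> E"
    using assms(3,4) unfolding E_def by auto
  have "open R0"
    using open_components[OF open_diff_vimage_crit_values_Un_cluster_set[OF assms(1,2)]] R0
    unfolding E_def by blast
  have R0_sub: "R0 \<subseteq> R - f -` E"
    using in_components_subset[OF R0] .
  have fc: "continuous_on R f"
    using assms(2) by (rule C1_on_imp_continuous_on)
  obtain e K where eK: "e > 0" "compact K" "K \<subseteq> R" "\<And>y. y \<in> R \<Longrightarrow> dist (f y) w < e \<Longrightarrow> y \<in> K"
    using non_cluster_point_proper_near[OF assms(1)] \<open>w \<notin> E\<close> unfolding E_def by blast
  have regular: "z \<in> R \<and> jacobian_det f z \<noteq> 0" if "z \<in> R0" "f z = w" for z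
    using that R0_sub \<open>w \<notin> E\<close> unfolding E_def crit_set_def by auto
  have "finite {z\<in>K. f z = w}"
    by (rule finite_regular_fibre_in_compact[OF assms(1,2) eK(2,3)])
      (use \<open>w \<notin> E\<close> eK(3) in \<open>auto simp: E_def crit_set_def\<close>)
  moreover have "{z\<in>R0. f z = w} \<subseteq> {z\<in>K. f z = w}"
    using eK(1,4) R0_sub by auto
  ultimately have "finite {z\<in>R0. f z = w}"
    by (rule finite_subset[rotated])
  show ?thesis
  proof (rule card_fibre_eventually_const[OF \<open>open R0\<close> _ \<open>finite {z\<in>R0. f z = w}\<close> _ _ _ _ eK(1),
        where A = "K \<inter> closure R0"])
    show "continuous_on R0 f" "continuous_on (K \<inter> closure R0) f"
      using R0_sub eK(3) by (auto intro: continuous_on_subset[OF fc])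
    show "\<exists>r>0. inj_on f (ball z r)" if "z \<in> R0" "f z = w" for z
      using regular[OF that] C1_on_locally_injective[OF assms(1,2)] by metis
    show "compact (K \<inter> closure R0)"
      by (rule compact_Int_closed[OF eK(2) closed_closure])
    show "{y\<in>K \<inter> closure R0. f y = w} \<subseteq> R0"
      using component_Int_closure[OF R0] eK(3) \<open>w \<notin> E\<close> by blast
    show "y \<in> K \<inter> closure R0" if "y \<in> R0" "dist (f y) w < e" for y
      using that eK(4) R0_sub closure_subset by blast
  qed
qed

theorem lemma3p11:
  fixes R R0 :: "(real^2) set" and f :: "real^2 \<Rightarrow> real^2" and z0 :: "real^2" and n0 :: nat
  assumes "open R"
    and "C1_on R f"
    and "R0 \<in> components (R - f -` (f ` crit_set R f \<union> cluster_set R f))"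
    and "z0 \<in> R0"
    and "finite {z\<in>R0. f z = f z0}"
    and "card {z\<in>R0. f z = f z0} = n0"
    and "0 < n0"
    and "enat n0 \<le> Val R f (f z0)"
  shows "\<forall>w\<in>connected_component_set (UNIV - (f ` crit_set R f \<union> cluster_set R f)) (f z0).
           finite {z\<in>R0. f z = w} \<and> card {z\<in>R0. f z = w} = n0"
proof
  define \<Omega>0 where "\<Omega>0 = connected_component_set (UNIV - (f ` crit_set R f \<union> cluster_set R f)) (f z0)"
  have local: "\<forall>\<^sub>F v in nhds w. finite {z\<in>R0. f z = v} \<and> card {z\<in>R0. f z = v} = card {z\<in>R0. f z = w}"
    if "w \<in> \<Omega>0" for w
  proof (rule card_fibre_in_component_locally_constant[OF assms(1-3)])
    show "w \<notin> f ` crit_set R f \<union> cluster_set R f"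
      using that connected_component_subset unfolding \<Omega>0_def by blast
  qed
  fix w assume "w \<in> \<Omega>0"
  have "f z0 \<in> \<Omega>0"
    using assms(3,4) in_components_subset unfolding \<Omega>0_def by fastforce
  moreover have "connected \<Omega>0"
    unfolding \<Omega>0_def by (rule connected_connected_component)
  moreover have "\<forall>\<^sub>F v in at a within \<Omega>0. card {z\<in>R0. f z = a} = card {z\<in>R0. f z = v}"
    if "a \<in> \<Omega>0" for a
    unfolding eventually_at_filter using local[OF that] by (rule eventually_mono) auto
  ultimately have "card {z\<in>R0. f z = f z0} = card {z\<in>R0. f z = w}"
    using connected_local_const[where f = "\<lambda>v. card {z\<in>R0. f z = v}"] \<open>w \<in> \<Omega>0\<close> by blast
  moreover have "finite {z\<in>R0. f z = w}"
    using eventually_nhds_x_imp_x[OF local[OF \<open>w \<in> \<Omega>0\<close>]] by blast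
  ultimately show "finite {z\<in>R0. f z = w} \<and> card {z\<in>R0. f z = w} = n0"
    using assms(6) by simp
qed

end
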